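(* For every $M>0$ there is an admissible set $\{a_1,\dots,a_k\}$ with $\sum_{i=1}^k 1/a_i>M$.
   Context: A finite set $\{a_1,\dots,a_k\}$ of positive integers is admissible if there is no prime $p$ such that $p$ divides $n\prod_{i=1}^k(a_in+1)$ for every integer $n$. *)

theory Defs
  imports Complex_Main "HOL-Computational_Algebra.Primes"
begin

definition admissible :: "nat set \<Rightarrow> bool" where
  "admissible A \<longleftrightarrow> finite A \<and> (\<forall>a\<in>A. a > 0) \<and>
     \<not> (\<exists>p::nat. prime p \<and>
          (\<forall>n::int. int p dvd n * (\<Prod>a\<in>A. int a * n + 1)))"

end

theory Submission
  imports Defs "HOL-Number_Theory.Number_Theory" "HOL-Library.FuncSet"
    "HOL-Analysis.Harmonic_Numbers"
begin

text \<open>A set of positive integers is admissible as soon as, for every prime \<open>p\<close>, it misses some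
  nonzero residue class \<open>r\<close> modulo \<open>p\<close>: take \<open>n \<equiv> -r\<^sup>-\<^sup>1 (mod p)\<close>. We sieve the multiples \<open>6 b\<close>,
  \<open>b \<le> B\<close>: they miss \<open>1\<close> modulo \<open>2\<close> and \<open>3\<close>, and for each prime \<open>5 \<le> p \<le> 6 B + 1\<close> we remove
  one class \<open>r\<^sub>p\<close> chosen from the upper half \<open>(p/2, p)\<close>; larger primes miss \<open>p - 1\<close>.
  Averaged over all choices of the \<open>r\<^sub>p\<close>, the reciprocal sum of the sifted set is
  \<open>\<Sum>\<^sub>a 1/a \<Prod>\<^sub>p (1 - [a mod p \<in> W\<^sub>p] / |W\<^sub>p|)\<close>, and some choice attains the mean.
  Because the classes are taken from the upper half, only primes \<open>p < 2 a\<close> affect \<open>a\<close>; on a dyadic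
  block \<open>y < b \<le> 2 y\<close> the total penalty \<open>\<Sum>\<^sub>p [6 b mod p \<in> W\<^sub>p] / |W\<^sub>p|\<close> averages to at most
  \<open>\<Sum>\<^bsub>p \<le> 24 y\<^esub> 1/p + O(1) = ln ln y + O(1)\<close> by Mertens' estimate, so by convexity of \<open>exp\<close>
  the block contributes \<open>\<gg> 1 / ln y\<close> to the mean. Summing over \<open>2\<^sup>J\<close> blocks gives a mean
  \<open>\<gg> ln J\<close>, which is unbounded.\<close>

lemma admissibleI_avoided_residue:
  assumes "finite A" and "\<forall>a\<in>A. a > 0"
    and avoid: "\<And>p. prime p \<Longrightarrow> \<exists>r. 0 < r \<and> r < p \<and> (\<forall>a\<in>A. a mod p \<noteq> r)"
  shows "admissible A"
  unfolding admissible_def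
proof (intro conjI assms notI)
  assume "\<exists>p::nat. prime p \<and> (\<forall>n::int. int p dvd n * (\<Prod>a\<in>A. int a * n + 1))"
  then obtain p where p: "prime p"
    and dvd_all: "\<And>n::int. int p dvd n * (\<Prod>a\<in>A. int a * n + 1)" by blast
  obtain r where "0 < r" "r < p" and r_avoided: "\<forall>a\<in>A. a mod p \<noteq> r"
    using avoid[OF p] by blast
  have p': "prime (int p)" using p by simp
  have "\<not> p dvd r" using \<open>0 < r\<close> \<open>r < p\<close> by (auto dest: dvd_imp_le)
  then have "coprime (int r) (int p)" using p by (simp add: prime_imp_coprime coprime_commute)
  then obtain u where "[int r * u = 1] (mod int p)" using cong_solve_coprime_int by blast
  then have ru: "int p dvd int r * u - 1" by (simp add: cong_iff_dvd_diff)
  have u: "\<not> int p dvd u"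
  proof
    assume "int p dvd u"
    then have "int p dvd int r * u" by simp
    from dvd_diff[OF this ru] have "int p dvd 1" by simp
    then show False using p' by (simp add: prime_int_iff)
  qed
  \<comment> \<open>the witness is \<open>n = -u\<close>, with \<open>u\<close> an inverse of \<open>r\<close> modulo \<open>p\<close>\<close>
  have "int p dvd (-u) * (\<Prod>a\<in>A. int a * (-u) + 1)" by (rule dvd_all)
  with u p' obtain a where "a \<in> A" and a: "int p dvd int a * (-u) + 1"
    by (auto simp: prime_dvd_mult_iff prime_dvd_prod_iff[OF \<open>finite A\<close>])
  have "int p dvd (int r * u - 1) + (int a * (-u) + 1)" using ru a by (rule dvd_add)
  then have "int p dvd (int r - int a) * u" by (simp add: algebra_simps)
  with u p' have "int p dvd int r - int a" by (simp add: prime_dvd_mult_iff)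
  then have "int r mod int p = int a mod int p" by (simp add: mod_eq_dvd_iff)
  then have "a mod p = r mod p" by (simp flip: of_nat_mod)
  with \<open>r < p\<close> \<open>a \<in> A\<close> r_avoided show False by simp
qed

section \<open>Mertens' estimate\<close>

lemma finite_primes_le [simp]: "finite {p::nat. prime p \<and> p \<le> n}"
  by (rule finite_subset[of _ "{..n}"]) auto

lemma primes_le_Suc:
  "{p. prime p \<and> p \<le> Suc n} =
     (if prime (Suc n) then insert (Suc n) {p. prime p \<and> p \<le> n} else {p. prime p \<and> p \<le> n})"
  by (auto simp: le_Suc_eq)

lemma card_primes_le: "card {p::nat. prime p \<and> p \<le> n} \<le> n"
proof -
  have "{p::nat. prime p \<and> p \<le> n} \<subseteq> {1..n}" using prime_ge_1_nat by auto
  then show ?thesis using card_mono[of "{1..n}"] by fastforce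
qed

lemma prod_primes_dvd:
  fixes x :: nat
  assumes "finite T" "\<forall>p\<in>T. prime p" "\<forall>p\<in>T. p dvd x"
  shows "\<Prod>T dvd x"
  using assms
proof (induction T rule: finite_induct)
  case empty then show ?case by simp
next
  case (insert q T)
  have "\<not> q dvd \<Prod>T"
  proof
    assume "q dvd \<Prod>T"
    then obtain t where "t \<in> T" "q dvd t" using insert prime_dvd_prod_iff[of T q "\<lambda>x. x"] by auto
    then have "q = t" using insert by (auto intro: primes_dvd_imp_eq)
    with \<open>t \<in> T\<close> \<open>q \<notin> T\<close> show False by simp
  qed
  then have "coprime q (\<Prod>T)" using insert.prems by (simp add: prime_imp_coprime)
  with insert show ?case by (simp add: divides_mult)
qed

lemma sum_primes_dvd_ln_le:
  assumes "finite T" "\<forall>p\<in>T. prime p" "m > 0"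
  shows "(\<Sum>p | p \<in> T \<and> p dvd m. ln (real p)) \<le> ln (real m)"
proof -
  let ?D = "{p. p \<in> T \<and> p dvd m}"
  have fin: "finite ?D" using assms(1) by simp
  have primes: "\<forall>p\<in>?D. prime p" using assms(2) by simp
  then have "ln (\<Prod>p\<in>?D. real p) = (\<Sum>p\<in>?D. ln (real p))"
    by (intro ln_prod[OF fin]) (auto dest: prime_gt_0_nat)
  then have "(\<Sum>p\<in>?D. ln (real p)) = ln (\<Prod>p\<in>?D. real p)" by simp
  also have "\<dots> = ln (real (\<Prod>?D))" by simp
  also have "\<dots> \<le> ln (real m)"
  proof (rule ln_mono)
    have "\<Prod>?D dvd m" using prod_primes_dvd[OF fin primes] by simp
    then have "\<Prod>?D \<le> m" using \<open>m > 0\<close> by (rule dvd_imp_le)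
    then show "real (\<Prod>?D) \<le> real m" by (simp only: of_nat_le_iff)
    show "0 < real (\<Prod>?D)"
      using primes by (intro of_nat_0_less_iff[THEN iffD2] prod_pos) (auto dest: prime_gt_0_nat)
  qed
  finally show ?thesis .
qed

text \<open>Legendre's formula for \<open>m!\<close>, truncated to its first term and to the primes of \<open>T\<close>.\<close>
lemma sum_div_mult_ln_le_ln_fact:
  assumes "finite T" "\<forall>p\<in>T. prime p"
  shows "(\<Sum>p\<in>T. real (m div p) * ln (real p)) \<le> ln (fact m)"
proof (induction m)
  case 0 then show ?case by simp
next
  case (Suc m)
  have "real (Suc m div p) * ln (real p)
      = real (m div p) * ln (real p) + (if p dvd Suc m then ln (real p) else 0)" for p
    by (simp add: div_Suc dvd_eq_mod_eq_0 algebra_simps)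
  then have "(\<Sum>p\<in>T. real (Suc m div p) * ln (real p))
      = (\<Sum>p\<in>T. real (m div p) * ln (real p)) + (\<Sum>p | p \<in> T \<and> p dvd Suc m. ln (real p))"
    using assms(1) by (simp add: sum.distrib sum.inter_filter)
  also have "\<dots> \<le> ln (fact m) + ln (real (Suc m))"
    using Suc sum_primes_dvd_ln_le[OF assms, of "Suc m"] by simp
  also have "\<dots> = ln (fact (Suc m))" by (simp add: ln_mult fact_gt_zero)
  finally show ?case .
qed

lemma of_nat_div_ge:
  assumes "p > 0"
  shows "real m / real p - 1 \<le> real (m div p)"
proof -
  have "m = p * (m div p) + m mod p" by simp
  moreover have "m mod p < p" using assms by simp
  ultimately have "real m < real p * real (m div p) + real p"
    by (metis add_less_cancel_left of_nat_add of_nat_less_iff of_nat_mult)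
  then show ?thesis using assms by (simp add: field_simps)
qed

definition prime_recip_sum :: "nat \<Rightarrow> real" where
  "prime_recip_sum n = (\<Sum>p | prime p \<and> p \<le> n. 1 / real p)"

definition mertens_sum :: "nat \<Rightarrow> real" where
  "mertens_sum n = (\<Sum>p | prime p \<and> p \<le> n. ln (real p) / real p)"

lemma prime_recip_sum_Suc:
  "prime_recip_sum (Suc n) = prime_recip_sum n + (if prime (Suc n) then 1 / real (Suc n) else 0)"
  unfolding prime_recip_sum_def by (simp add: primes_le_Suc)

lemma mertens_sum_Suc:
  "mertens_sum (Suc n) = mertens_sum n + (if prime (Suc n) then ln (real (Suc n)) / real (Suc n) else 0)"
  unfolding mertens_sum_def by (simp add: primes_le_Suc)

lemma ln_fact_le: "ln (fact n :: real) \<le> real n * ln (real n)"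
proof (cases "n = 0")
  case False
  have "(fact n :: real) \<le> real n ^ n" using fact_le_power[of n] by simp
  then have "ln (fact n :: real) \<le> ln (real n ^ n)" by (intro ln_mono) (auto simp: fact_gt_zero)
  also have "\<dots> = real n * ln (real n)" using False by (simp add: ln_realpow)
  finally show ?thesis .
qed simp

lemma sum_primes_ln_le: "(\<Sum>p | prime p \<and> p \<le> n. ln (real p)) \<le> real n * ln (real n)"
proof -
  have "(\<Sum>p | prime p \<and> p \<le> n. ln (real p)) \<le> (\<Sum>p | prime p \<and> p \<le> n. ln (real n))"
    by (intro sum_mono ln_mono) (auto dest: prime_gt_0_nat)
  also have "\<dots> \<le> real n * ln (real n)"
    using card_primes_le[of n] by (cases "n = 0") (auto intro: mult_right_mono)
  finally show ?thesis .
qed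

lemma mult_mertens_sum_le:
  "real N * mertens_sum n \<le> real N * ln (real N) + real n * ln (real n)"
proof -
  let ?P = "{p. prime p \<and> p \<le> n}"
  have "real N * mertens_sum n - (\<Sum>p\<in>?P. ln (real p)) = (\<Sum>p\<in>?P. (real N / real p - 1) * ln (real p))"
    unfolding mertens_sum_def by (simp add: algebra_simps sum_subtractf sum_distrib_left)
  also have "\<dots> \<le> (\<Sum>p\<in>?P. real (N div p) * ln (real p))"
    by (intro sum_mono mult_right_mono of_nat_div_ge) (auto dest: prime_gt_0_nat)
  also have "\<dots> \<le> ln (fact N)" by (rule sum_div_mult_ln_le_ln_fact) auto
  also have "\<dots> \<le> real N * ln (real N)" by (rule ln_fact_le)
  finally show ?thesis using sum_primes_ln_le[of n] by linarith
qed

lemma mertens_sum_le: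
  assumes "n \<ge> 2"
  shows "mertens_sum n \<le> ln (real n) + ln (ln (real n) + 1) + 1"
proof -
  define L where "L = ln (real n)"
  define k where "k = nat \<lceil>L\<rceil>"
  have "L > 0" unfolding L_def using assms by simp
  then have k: "L \<le> real k" "real k \<le> L + 1" "real k > 0" unfolding k_def by linarith+
  \<comment> \<open>with \<open>N = n k\<close> the error term \<open>n ln n / N\<close> becomes \<open>L / k \<le> 1\<close>\<close>
  have "real (n * k) * mertens_sum n \<le> real (n * k) * ln (real (n * k)) + real n * L"
    unfolding L_def by (rule mult_mertens_sum_le)
  then have "real n * (real k * mertens_sum n) \<le> real n * (real k * ln (real (n * k)) + L)"
    by (simp only: of_nat_mult algebra_simps)
  then have "real k * mertens_sum n \<le> real k * ln (real (n * k)) + L" using assms by simp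
  then have "mertens_sum n \<le> ln (real (n * k)) + L / real k"
    using k by (simp add: field_simps)
  also have "ln (real (n * k)) = L + ln (real k)" unfolding L_def using k assms by (simp add: ln_mult)
  also have "ln (real k) \<le> ln (L + 1)" using k by (intro ln_mono) auto
  also have "L / real k \<le> 1" using k by simp
  finally show ?thesis unfolding L_def by simp
qed

definition mertens_correction :: "real \<Rightarrow> real" where
  "mertens_correction u = (ln (u + 1) + 2) / u"

lemma mult_inverse_diff_le_ln_diff:
  fixes u v :: real
  assumes "0 < u" "u \<le> v"
  shows "u * (1 / u - 1 / v) \<le> ln v - ln u"
proof -
  have "ln (u / v) \<le> u / v - 1" using assms by (intro ln_le_minus_one) simp
  moreover have "u * (1 / u - 1 / v) = 1 - u / v" using assms by (simp add: field_simps)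
  ultimately show ?thesis using assms by (simp add: ln_div)
qed

lemma mertens_correction_decrement:
  fixes u v :: real
  assumes "0 < u" "u \<le> v"
  shows "(ln (u + 1) + 1) * (1 / u - 1 / v) \<le> mertens_correction u - mertens_correction v"
proof -
  have "ln ((v + 1) / (u + 1)) \<le> (v + 1) / (u + 1) - 1" using assms by (intro ln_le_minus_one) simp
  then have "ln (v + 1) - ln (u + 1) \<le> (v - u) / (u + 1)" using assms by (simp add: ln_div field_simps)
  also have "\<dots> \<le> (v - u) / u" using assms by (intro divide_left_mono) auto
  finally have "(ln (v + 1) - ln (u + 1)) / v \<le> ((v - u) / u) / v"
    using assms by (intro divide_right_mono) auto
  also have "\<dots> = 1 / u - 1 / v" using assms by (simp add: field_simps)
  finally have "(ln (v + 1) - ln (u + 1)) / v \<le> 1 / u - 1 / v" .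
  moreover have "mertens_correction u - mertens_correction v - (ln (u + 1) + 1) * (1 / u - 1 / v)
      = (1 / u - 1 / v) - (ln (v + 1) - ln (u + 1)) / v"
    unfolding mertens_correction_def using assms by (simp add: field_simps)
  ultimately show ?thesis by linarith
qed

lemma prime_recip_sum_minus_mertens_Suc:
  assumes "N \<ge> 2"
  shows "prime_recip_sum (Suc N) - mertens_sum (Suc N) / ln (real (Suc N))
    = prime_recip_sum N - mertens_sum N / ln (real N)
      + mertens_sum N * (1 / ln (real N) - 1 / ln (real (Suc N)))"
proof -
  have "ln (real (Suc N)) > 0" using assms by simp
  then show ?thesis unfolding prime_recip_sum_Suc mertens_sum_Suc by (auto simp: field_simps)
qed

text \<open>Abel summation in the form of a nonincreasing potential: passing from \<open>N\<close> to \<open>N + 1\<close>,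
  \<open>prime_recip_sum N - mertens_sum N / ln N\<close> grows by \<open>mertens_sum N (1 / ln N - 1 / ln (N + 1))\<close>,
  which by \<open>mertens_sum_le\<close> is at most the growth of
  \<open>ln (ln N) - mertens_correction (ln N)\<close>.\<close>
definition mertens_potential :: "nat \<Rightarrow> real" where
  "mertens_potential N = prime_recip_sum N - mertens_sum N / ln (real N)
     - ln (ln (real N)) + mertens_correction (ln (real N))"

lemma mertens_potential_Suc_le:
  assumes "N \<ge> 2"
  shows "mertens_potential (Suc N) \<le> mertens_potential N"
proof -
  define u where "u = ln (real N)"
  define v where "v = ln (real (Suc N))"
  have "0 < u" "u \<le> v" unfolding u_def v_def using assms by simp_all
  then have "0 \<le> 1 / u - 1 / v" by (simp add: frac_le)
  have "mertens_sum N * (1 / u - 1 / v) \<le> (u + (ln (u + 1) + 1)) * (1 / u - 1 / v)"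
    using mertens_sum_le[OF assms] \<open>0 \<le> 1 / u - 1 / v\<close> unfolding u_def
    by (intro mult_right_mono) auto
  also have "\<dots> \<le> (ln v - ln u) + (mertens_correction u - mertens_correction v)"
    using mult_inverse_diff_le_ln_diff[OF \<open>0 < u\<close> \<open>u \<le> v\<close>]
      mertens_correction_decrement[OF \<open>0 < u\<close> \<open>u \<le> v\<close>]
    by (simp add: distrib_right)
  finally show ?thesis
    using prime_recip_sum_minus_mertens_Suc[OF assms] unfolding mertens_potential_def u_def v_def by simp
qed

lemma mertens_potential_le: "N \<ge> 2 \<Longrightarrow> mertens_potential N \<le> mertens_potential 2"
proof (induction N rule: dec_induct)
  case (step n)
  then show ?case using mertens_potential_Suc_le[of n] by simp
qed simp

theorem prime_recip_sum_le_ln_ln: "\<exists>C. \<forall>N\<ge>3. prime_recip_sum N \<le> ln (ln (real N)) + C"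
proof (intro exI allI impI)
  fix N :: nat
  assume "N \<ge> 3"
  define u where "u = ln (real N)"
  have "exp 1 \<le> real N" using exp_le \<open>N \<ge> 3\<close> by linarith
  then have "u \<ge> 1" unfolding u_def using \<open>N \<ge> 3\<close> by (simp add: ln_ge_iff)
  have "mertens_correction u \<ge> 0" unfolding mertens_correction_def using \<open>u \<ge> 1\<close> by simp
  have "ln (u + 1) \<le> u" using ln_add_one_self_le_self[of u] \<open>u \<ge> 1\<close> by (simp add: add.commute)
  moreover have "mertens_sum N \<le> u + ln (u + 1) + 1" using mertens_sum_le[of N] \<open>N \<ge> 3\<close> unfolding u_def by simp
  ultimately have "mertens_sum N \<le> 3 * u" using \<open>u \<ge> 1\<close> by simp
  then have "mertens_sum N / u \<le> 3" using \<open>u \<ge> 1\<close> by (simp add: field_simps)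
  moreover have "prime_recip_sum N = mertens_potential N + ln u - mertens_correction u + mertens_sum N / u"
    unfolding mertens_potential_def u_def by simp
  ultimately show "prime_recip_sum N \<le> ln (ln (real N)) + (mertens_potential 2 + 3)"
    using mertens_potential_le[of N] \<open>N \<ge> 3\<close> \<open>mertens_correction u \<ge> 0\<close> unfolding u_def by linarith
qed

section \<open>Sieving multiples of six by upper-half residues\<close>

definition upper_residues :: "nat \<Rightarrow> nat set" where
  "upper_residues p = {p div 2<..<p}"

definition sieving_primes :: "nat \<Rightarrow> nat set" where
  "sieving_primes B = {p. prime p \<and> 5 \<le> p \<and> p \<le> 6 * B + 1}"

definition six_multiples :: "nat \<Rightarrow> nat set" where
  "six_multiples B = (\<lambda>b. 6 * b) ` {1..B}"

definition residue_choices :: "nat \<Rightarrow> (nat \<Rightarrow> nat) set" where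
  "residue_choices B = (\<Pi>\<^sub>E p\<in>sieving_primes B. upper_residues p)"

definition sifted_set :: "nat \<Rightarrow> (nat \<Rightarrow> nat) \<Rightarrow> nat set" where
  "sifted_set B r = {a \<in> six_multiples B. \<forall>p\<in>sieving_primes B. a mod p \<noteq> r p}"

lemma finite_sieving_primes [simp]: "finite (sieving_primes B)"
  unfolding sieving_primes_def by (rule finite_subset[of _ "{..6 * B + 1}"]) auto

lemma finite_six_multiples [simp]: "finite (six_multiples B)"
  unfolding six_multiples_def by simp

lemma finite_upper_residues [simp]: "finite (upper_residues p)"
  unfolding upper_residues_def by simp

lemma finite_residue_choices [simp]: "finite (residue_choices B)"
  unfolding residue_choices_def by (simp add: finite_PiE)

lemma card_upper_residues_ge:
  assumes "p \<ge> 5"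
  shows "card (upper_residues p) \<ge> 2" and "real (card (upper_residues p)) \<ge> real p / 4"
  using assms unfolding upper_residues_def by simp_all

lemma mod_notin_upper_residues: "a \<le> p div 2 \<Longrightarrow> a mod p \<notin> upper_residues p"
  unfolding upper_residues_def by (cases "p = 0") auto

lemma sieving_primesD: "p \<in> sieving_primes B \<Longrightarrow> prime p \<and> p \<ge> 5"
  unfolding sieving_primes_def by simp

lemma admissible_sifted_set:
  assumes r: "r \<in> residue_choices B"
  shows "admissible (sifted_set B r)"
proof (rule admissibleI_avoided_residue)
  show "finite (sifted_set B r)" "\<forall>a\<in>sifted_set B r. 0 < a"
    unfolding sifted_set_def six_multiples_def by auto
next
  fix p :: nat
  assume p: "prime p"
  have "p \<noteq> 4" using prime_odd_nat[OF p] by auto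
  then have "p \<le> 3 \<or> (p \<ge> 5 \<and> p \<le> 6 * B + 1) \<or> p > 6 * B + 1" by linarith
  then consider "p \<le> 3" | "p \<ge> 5" "p \<le> 6 * B + 1" | "p > 6 * B + 1" by blast
  then show "\<exists>s. 0 < s \<and> s < p \<and> (\<forall>a\<in>sifted_set B r. a mod p \<noteq> s)"
  proof cases
    case 1
    \<comment> \<open>for \<open>p = 2, 3\<close> every element is \<open>\<equiv> 0\<close>\<close>
    then have "p = 2 \<or> p = 3" using prime_ge_2_nat[OF p] by arith
    then have "\<forall>a\<in>sifted_set B r. a mod p \<noteq> 1" unfolding sifted_set_def six_multiples_def by auto
    then show ?thesis using prime_gt_1_nat[OF p] by blast
  next
    case 2
    then have "p \<in> sieving_primes B" using p unfolding sieving_primes_def by simp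
    then have "r p \<in> upper_residues p" using r unfolding residue_choices_def by auto
    then have "0 < r p \<and> r p < p" unfolding upper_residues_def by auto
    moreover have "\<forall>a\<in>sifted_set B r. a mod p \<noteq> r p"
      using \<open>p \<in> sieving_primes B\<close> unfolding sifted_set_def by auto
    ultimately show ?thesis by blast
  next
    case 3
    \<comment> \<open>every element is at most \<open>6 B < p - 1\<close>\<close>
    then have "\<forall>a\<in>sifted_set B r. a mod p \<noteq> p - 1"
      unfolding sifted_set_def six_multiples_def by auto
    then show ?thesis using 3 by (intro exI[of _ "p - 1"]) auto
  qed
qed

lemma exists_ge_average:
  fixes f :: "'a \<Rightarrow> real"
  assumes "finite R" "R \<noteq> {}" "real (card R) * E \<le> (\<Sum>r\<in>R. f r)"
  shows "\<exists>r\<in>R. E \<le> f r"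
proof (rule ccontr)
  assume "\<not> ?thesis"
  then have "(\<Sum>r\<in>R. f r) < (\<Sum>r\<in>R. E)" using assms by (intro sum_strict_mono) auto
  with assms show False by simp
qed

text \<open>The mean of the reciprocal sum of \<open>sifted_set B r\<close> over all \<open>r \<in> residue_choices B\<close>.\<close>
definition expected_recip_sum :: "nat \<Rightarrow> real" where
  "expected_recip_sum B = (\<Sum>a\<in>six_multiples B. 1 / real a *
     (\<Prod>p\<in>sieving_primes B. real (card (upper_residues p - {a mod p})) / real (card (upper_residues p))))"

lemma card_residue_choices_avoiding:
  "card {r \<in> residue_choices B. \<forall>p\<in>sieving_primes B. a mod p \<noteq> r p}
     = (\<Prod>p\<in>sieving_primes B. card (upper_residues p - {a mod p}))"
proof -
  have "{r \<in> residue_choices B. \<forall>p\<in>sieving_primes B. a mod p \<noteq> r p}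
      = (\<Pi>\<^sub>E p\<in>sieving_primes B. upper_residues p - {a mod p})"
    unfolding residue_choices_def PiE_def Pi_def extensional_def by auto
  then show ?thesis by (simp add: card_PiE)
qed

lemma real_card_residue_choices_avoiding:
  "real (card {r \<in> residue_choices B. \<forall>p\<in>sieving_primes B. a mod p \<noteq> r p})
     = real (card (residue_choices B)) * (\<Prod>p\<in>sieving_primes B.
         real (card (upper_residues p - {a mod p})) / real (card (upper_residues p)))"
proof -
  let ?w = "\<lambda>p. real (card (upper_residues p))"
  have "?w p \<noteq> 0" if "p \<in> sieving_primes B" for p
  proof -
    have "card (upper_residues p) \<noteq> 0"
      using card_upper_residues_ge(1)[of p] sieving_primesD[OF that] by linarith
    then show ?thesis by (metis of_nat_eq_0_iff)
  qed
  then have nonzero: "(\<Prod>p\<in>sieving_primes B. ?w p) \<noteq> 0" by (simp add: prod_zero_iff)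
  have card_R: "real (card (residue_choices B)) = (\<Prod>p\<in>sieving_primes B. ?w p)"
    unfolding residue_choices_def card_PiE[OF finite_sieving_primes] by (rule of_nat_prod)
  have "real (card {r \<in> residue_choices B. \<forall>p\<in>sieving_primes B. a mod p \<noteq> r p})
      = (\<Prod>p\<in>sieving_primes B. real (card (upper_residues p - {a mod p})))"
    unfolding card_residue_choices_avoiding by (rule of_nat_prod)
  also have "\<dots> = (\<Prod>p\<in>sieving_primes B. ?w p)
      * ((\<Prod>p\<in>sieving_primes B. real (card (upper_residues p - {a mod p})))
        / (\<Prod>p\<in>sieving_primes B. ?w p))"
    using nonzero by simp
  finally show ?thesis by (simp only: card_R prod_dividef)
qed

lemma sum_sifted_set_recip:
  "(\<Sum>r\<in>residue_choices B. \<Sum>a\<in>sifted_set B r. 1 / real a)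
     = real (card (residue_choices B)) * expected_recip_sum B"
proof -
  let ?R = "residue_choices B"
  let ?avoids = "\<lambda>a r. \<forall>p\<in>sieving_primes B. a mod p \<noteq> r p"
  have "(\<Sum>r\<in>?R. \<Sum>a\<in>sifted_set B r. 1 / real a)
      = (\<Sum>r\<in>?R. \<Sum>a\<in>six_multiples B. if ?avoids a r then 1 / real a else 0)"
    unfolding sifted_set_def by (intro sum.cong refl sum.inter_filter) simp
  also have "\<dots> = (\<Sum>a\<in>six_multiples B. \<Sum>r\<in>?R. if ?avoids a r then 1 / real a else 0)"
    by (rule sum.swap)
  also have "\<dots> = (\<Sum>a\<in>six_multiples B. \<Sum>r \<in> {r \<in> ?R. ?avoids a r}. 1 / real a)"
    by (intro sum.cong refl sum.inter_filter[symmetric]) simp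
  also have "\<dots> = real (card ?R) * expected_recip_sum B"
    unfolding expected_recip_sum_def
    by (simp add: real_card_residue_choices_avoiding sum_distrib_left mult_ac)
  finally show ?thesis .
qed

lemma exists_sifted_set_recip_sum_ge:
  "\<exists>r\<in>residue_choices B. expected_recip_sum B \<le> (\<Sum>a\<in>sifted_set B r. 1 / real a)"
proof (rule exists_ge_average)
  have "upper_residues p \<noteq> {}" if "p \<in> sieving_primes B" for p
    using card_upper_residues_ge(1)[of p] sieving_primesD[OF that] by (intro notI) simp
  then show "residue_choices B \<noteq> {}" unfolding residue_choices_def by (auto simp: PiE_eq_empty_iff)
  show "real (card (residue_choices B)) * expected_recip_sum B
      \<le> (\<Sum>r\<in>residue_choices B. \<Sum>a\<in>sifted_set B r. 1 / real a)"
    by (simp add: sum_sifted_set_recip)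
qed simp

section \<open>A lower bound for the mean\<close>

text \<open>\<open>exp (- removal_penalty W c)\<close> bounds the survival ratio \<open>|W - {c}| / |W|\<close> from below
  (\<open>ln (1 - x) \<ge> - x - 2 x\<^sup>2\<close> for \<open>x \<le> 1/2\<close>) and, unlike it, turns products over primes into sums.\<close>
definition removal_penalty :: "'a set \<Rightarrow> 'a \<Rightarrow> real" where
  "removal_penalty W c = (if c \<in> W then 1 / real (card W) + 2 / real (card W) ^ 2 else 0)"

lemma exp_neg_removal_penalty_le:
  assumes "finite W" "card W \<ge> 2"
  shows "exp (- removal_penalty W c) \<le> real (card (W - {c})) / real (card W)"
proof (cases "c \<in> W")
  case True
  define x where "x = 1 / real (card W)"
  have "0 \<le> x" "x \<le> 1 / 2" unfolding x_def using assms by (simp_all add: field_simps)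
  have "W \<noteq> {}" using assms(2) by (intro notI) simp
  then have ratio: "real (card (W - {c})) / real (card W) = 1 - x"
    unfolding x_def using True assms by (simp add: of_nat_diff diff_divide_distrib)
  have "- x - 2 * x\<^sup>2 \<le> ln (1 - x)" by (rule ln_one_minus_pos_lower_bound) fact+
  then have "exp (- x - 2 * x\<^sup>2) \<le> 1 - x" using \<open>x \<le> 1 / 2\<close> by (simp add: ln_ge_iff)
  then show ?thesis
    unfolding ratio removal_penalty_def using True by (simp add: x_def power_divide)
next
  case False
  have "card W \<noteq> 0" using assms(2) by linarith
  with False show ?thesis by (simp add: removal_penalty_def)
qed

definition sieve_penalty :: "nat \<Rightarrow> nat \<Rightarrow> real" where
  "sieve_penalty B a = (\<Sum>p\<in>sieving_primes B. removal_penalty (upper_residues p) (a mod p))"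

lemma expected_recip_sum_ge_penalized:
  "(\<Sum>b\<in>{1..B}. 1 / (6 * real b) * exp (- sieve_penalty B (6 * b))) \<le> expected_recip_sum B"
proof -
  have "(\<Sum>b\<in>{1..B}. 1 / (6 * real b) * exp (- sieve_penalty B (6 * b)))
      = (\<Sum>a\<in>six_multiples B. 1 / real a * exp (- sieve_penalty B a))"
    unfolding six_multiples_def by (subst sum.reindex) (auto simp: inj_on_def)
  also have "\<dots> \<le> expected_recip_sum B"
    unfolding expected_recip_sum_def
  proof (intro sum_mono mult_left_mono)
    fix a
    have "exp (- sieve_penalty B a)
        = (\<Prod>p\<in>sieving_primes B. exp (- removal_penalty (upper_residues p) (a mod p)))"
      unfolding sieve_penalty_def by (simp add: exp_sum[symmetric] sum_negf)
    also have "\<dots> \<le> (\<Prod>p\<in>sieving_primes B.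
        real (card (upper_residues p - {a mod p})) / real (card (upper_residues p)))"
      by (intro prod_mono conjI exp_neg_removal_penalty_le card_upper_residues_ge(1))
        (auto dest: sieving_primesD)
    finally show "exp (- sieve_penalty B a) \<le> (\<Prod>p\<in>sieving_primes B.
        real (card (upper_residues p - {a mod p})) / real (card (upper_residues p)))" .
  qed simp
  finally show ?thesis .
qed

lemma card_residue_class_le:
  assumes "p > 0" "m \<le> n"
  shows "real (card {b \<in> {m<..n}. b mod p = c}) \<le> (real n - real m) / real p + 2"
proof -
  let ?S = "{b \<in> {m<..n}. b mod p = c}"
  have "inj_on (\<lambda>b. b div p) ?S"
    by (rule inj_onI) (metis (mono_tags, lifting) div_mult_mod_eq mem_Collect_eq)
  moreover have "(\<lambda>b. b div p) ` ?S \<subseteq> {m div p..n div p}" by (auto intro!: div_le_mono)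
  ultimately have "card ?S \<le> card {m div p..n div p}" by (intro card_inj_on_le) auto
  also have "\<dots> = Suc (n div p) - m div p" by simp
  finally have "real (card ?S) \<le> real (n div p) + 1 - real (m div p)"
    using div_le_mono[OF \<open>m \<le> n\<close>, of p] by linarith
  also have "\<dots> \<le> real n / real p + 1 - (real m / real p - 1)"
    using of_nat_div_le_of_nat[where 'a = real, of n p] of_nat_div_ge[OF \<open>p > 0\<close>, of m] by linarith
  also have "\<dots> = (real n - real m) / real p + 2" by (simp add: diff_divide_distrib)
  finally show ?thesis .
qed

lemma card_mult_residues_le:
  assumes "coprime k p" "p > 0" "finite W" "m \<le> n"
  shows "real (card {b \<in> {m<..n}. k * b mod p \<in> W}) \<le> real (card W) * ((real n - real m) / real p + 2)"
proof -
  define S where "S w = {b \<in> {m<..n}. k * b mod p = w}" for w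
  have "real (card (S w)) \<le> (real n - real m) / real p + 2" for w
  proof (cases "S w = {}")
    case False
    then obtain b0 where b0: "b0 \<in> S w" by auto
    \<comment> \<open>multiplication by \<open>k\<close> is injective modulo \<open>p\<close>\<close>
    have "S w \<subseteq> {b \<in> {m<..n}. b mod p = b0 mod p}"
    proof
      fix b
      assume b: "b \<in> S w"
      then have "[k * b = k * b0] (mod p)" using b0 unfolding S_def cong_def by auto
      then have "[b = b0] (mod p)" using cong_mult_lcancel_nat[OF assms(1)] by simp
      then show "b \<in> {b \<in> {m<..n}. b mod p = b0 mod p}" using b unfolding S_def cong_def by auto
    qed
    then have "card (S w) \<le> card {b \<in> {m<..n}. b mod p = b0 mod p}" by (intro card_mono) auto
    then show ?thesis using card_residue_class_le[OF assms(2,4), of "b0 mod p"] by linarith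
  qed (use assms in simp)
  moreover have "{b \<in> {m<..n}. k * b mod p \<in> W} = (\<Union>w\<in>W. S w)" unfolding S_def by auto
  then have "card {b \<in> {m<..n}. k * b mod p \<in> W} \<le> (\<Sum>w\<in>W. card (S w))"
    using card_UN_le[OF assms(3)] by simp
  ultimately show ?thesis by (smt (verit) of_nat_le_iff of_nat_sum sum_bounded_above)
qed

lemma sum_inverse_squares_le:
  assumes "n \<ge> 1"
  shows "(\<Sum>m\<in>{2..n}. 1 / real m ^ 2) \<le> 1 - 1 / real n"
  using assms
proof (induction n rule: dec_induct)
  case (step n)
  have "real n \<ge> 1" using step by simp
  have "{2..Suc n} = insert (Suc n) {2..n}" using step by auto
  then have "(\<Sum>m\<in>{2..Suc n}. 1 / real m ^ 2) = 1 / real (Suc n) ^ 2 + (\<Sum>m\<in>{2..n}. 1 / real m ^ 2)"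
    by simp
  also have "\<dots> \<le> 1 / (real n * real (Suc n)) + (1 - 1 / real n)"
    using step.IH \<open>real n \<ge> 1\<close> by (intro add_mono divide_left_mono) (simp_all add: power2_eq_square)
  also have "\<dots> = 1 - 1 / real (Suc n)"
  proof -
    have "1 / real n - 1 / real (Suc n) = 1 / (real n * real (Suc n))"
      using \<open>real n \<ge> 1\<close> by (simp add: field_simps)
    then show ?thesis by simp
  qed
  finally show ?case .
qed simp

lemma sum_primes_inverse_squares_le: "(\<Sum>p | prime p \<and> p \<le> n. 1 / real p ^ 2) \<le> 1"
proof -
  have "(\<Sum>p | prime p \<and> p \<le> n. 1 / real p ^ 2) \<le> (\<Sum>m\<in>{2..n}. 1 / real m ^ 2)"
    using prime_ge_2_nat by (intro sum_mono2) auto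
  also have "\<dots> \<le> 1"
  proof (cases "n \<ge> 1")
    case True
    then have "(\<Sum>m\<in>{2..n}. 1 / real m ^ 2) \<le> 1 - 1 / real n" by (rule sum_inverse_squares_le)
    also have "\<dots> \<le> 1" by simp
    finally show ?thesis .
  qed simp
  finally show ?thesis .
qed

lemma coprime_6_prime:
  fixes p :: nat
  assumes "prime p" "p \<ge> 5"
  shows "coprime 6 p"
proof -
  have "\<not> p dvd 2" "\<not> p dvd 3" using assms by (auto dest: dvd_imp_le)
  then have "\<not> p dvd 2 * 3" using prime_dvd_mult_iff[OF assms(1), of 2 3] by blast
  then show ?thesis using assms(1) by (simp add: prime_imp_coprime coprime_commute)
qed

lemma sum_removal_penalty_block_le:
  assumes "p \<in> sieving_primes B"
  shows "(\<Sum>b\<in>{y<..2*y}. removal_penalty (upper_residues p) (6 * b mod p))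
    \<le> (if p \<le> 24 * y then real y / real p + 8 * real y * (1 / real p ^ 2) + 4 else 0)"
proof -
  have "prime p" "p \<ge> 5" using sieving_primesD[OF assms] by auto
  define w where "w = real (card (upper_residues p))"
  have "w \<ge> 2" "w \<ge> real p / 4" unfolding w_def using card_upper_residues_ge[OF \<open>p \<ge> 5\<close>] by auto
  let ?hits = "{b \<in> {y<..2*y}. 6 * b mod p \<in> upper_residues p}"
  have "(\<Sum>b\<in>{y<..2*y}. removal_penalty (upper_residues p) (6 * b mod p))
      = (\<Sum>b\<in>?hits. 1 / w + 2 / w ^ 2)"
    unfolding removal_penalty_def w_def by (rule sum.inter_filter[symmetric]) simp
  also have "\<dots> = (1 / w + 2 / w ^ 2) * real (card ?hits)" by simp
  finally have penalty: "(\<Sum>b\<in>{y<..2*y}. removal_penalty (upper_residues p) (6 * b mod p))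
      = (1 / w + 2 / w ^ 2) * real (card ?hits)" .
  show ?thesis
  proof (cases "p \<le> 24 * y")
    case True
    have "real (card ?hits) \<le> w * (real y / real p + 2)"
      using card_mult_residues_le[OF coprime_6_prime[OF \<open>prime p\<close> \<open>p \<ge> 5\<close>], of "upper_residues p" y "2 * y"]
        \<open>p \<ge> 5\<close> unfolding w_def by simp
    then have "(1 / w + 2 / w ^ 2) * real (card ?hits) \<le> (1 / w + 2 / w ^ 2) * (w * (real y / real p + 2))"
      using \<open>w \<ge> 2\<close> by (intro mult_left_mono) auto
    also have "\<dots> = (1 + 2 / w) * (real y / real p + 2)"
      using \<open>w \<ge> 2\<close> by (simp add: field_simps power2_eq_square)
    also have "\<dots> = real y / real p + 2 * (1 / w) * (real y / real p) + 2 + 4 / w"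
      by (simp add: algebra_simps)
    also have "\<dots> \<le> real y / real p + 2 * (4 / real p) * (real y / real p) + 2 + 2"
      using \<open>w \<ge> 2\<close> \<open>w \<ge> real p / 4\<close> \<open>p \<ge> 5\<close>
      by (intro add_mono mult_right_mono mult_left_mono) (simp_all add: field_simps)
    also have "\<dots> = real y / real p + 8 * real y * (1 / real p ^ 2) + 4" by (simp add: power2_eq_square)
    finally show ?thesis using penalty True by simp
  next
    case False
    \<comment> \<open>then \<open>6 b \<le> 12 y < p / 2\<close>, so \<open>p\<close> sieves out nothing in the block\<close>
    have "6 * b mod p \<notin> upper_residues p" if "b \<le> 2 * y" for b
      using that False by (intro mod_notin_upper_residues) presburger
    then have "?hits = {}" by auto
    then have "card ?hits = 0" by (simp only: card.empty)
    then show ?thesis unfolding penalty using False by (simp del: card_0_eq)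
  qed
qed

lemma sum_sieve_penalty_block_le:
  "(\<Sum>b\<in>{y<..2*y}. sieve_penalty B (6 * b)) \<le> real y * (prime_recip_sum (24 * y) + 104)"
proof -
  let ?U = "\<lambda>p. real y / real p + 8 * real y * (1 / real p ^ 2) + 4"
  let ?P = "{p. prime p \<and> p \<le> 24 * y}"
  have "(\<Sum>b\<in>{y<..2*y}. sieve_penalty B (6 * b))
      = (\<Sum>p\<in>sieving_primes B. \<Sum>b\<in>{y<..2*y}. removal_penalty (upper_residues p) (6 * b mod p))"
    unfolding sieve_penalty_def by (rule sum.swap)
  also have "\<dots> \<le> (\<Sum>p\<in>sieving_primes B. if p \<le> 24 * y then ?U p else 0)"
    by (intro sum_mono sum_removal_penalty_block_le)
  also have "\<dots> = (\<Sum>p | p \<in> sieving_primes B \<and> p \<le> 24 * y. ?U p)"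
    by (rule sum.inter_filter[symmetric]) simp
  also have "\<dots> \<le> (\<Sum>p\<in>?P. ?U p)"
    by (intro sum_mono2) (auto simp: sieving_primes_def)
  also have "\<dots> = real y * prime_recip_sum (24 * y) + 8 * real y * (\<Sum>p\<in>?P. 1 / real p ^ 2)
      + 4 * real (card ?P)"
    unfolding prime_recip_sum_def by (simp add: sum.distrib sum_distrib_left)
  also have "\<dots> \<le> real y * prime_recip_sum (24 * y) + 8 * real y * 1 + 4 * real (24 * y)"
    using sum_primes_inverse_squares_le[of "24 * y"] card_primes_le[of "24 * y"]
    by (intro add_mono mult_left_mono order.refl) simp_all
  also have "\<dots> = real y * (prime_recip_sum (24 * y) + 104)" by (simp add: algebra_simps)
  finally show ?thesis .
qed

text \<open>Jensen's inequality for \<open>exp\<close>, via its tangent line at \<open>-\<mu>\<close>.\<close>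
lemma card_mult_exp_neg_le_sum_exp:
  fixes x :: "'a \<Rightarrow> real"
  assumes "finite I" "(\<Sum>i\<in>I. x i) \<le> real (card I) * \<mu>"
  shows "real (card I) * exp (- \<mu>) \<le> (\<Sum>i\<in>I. exp (- x i))"
proof -
  have tangent: "exp (- \<mu>) * (1 + \<mu> - x i) \<le> exp (- x i)" for i
  proof -
    have "exp (- \<mu>) * (1 + (\<mu> - x i)) \<le> exp (- \<mu>) * exp (\<mu> - x i)"
      by (intro mult_left_mono exp_ge_add_one_self) simp
    then show ?thesis by (simp add: mult_exp_exp add_diff_eq)
  qed
  have "real (card I) * exp (- \<mu>) \<le> exp (- \<mu>) * (real (card I) * (1 + \<mu>) - (\<Sum>i\<in>I. x i))"
    using assms(2) by (simp add: algebra_simps)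
  also have "\<dots> = (\<Sum>i\<in>I. exp (- \<mu>) * (1 + \<mu> - x i))"
    by (simp add: sum_distrib_left sum_distrib_right sum_subtractf algebra_simps)
  also have "\<dots> \<le> (\<Sum>i\<in>I. exp (- x i))" by (intro sum_mono tangent)
  finally show ?thesis .
qed

lemma block_penalized_recip_sum_ge:
  assumes "y \<ge> 1"
  shows "exp (- (prime_recip_sum (24 * y) + 104)) / 12
    \<le> (\<Sum>b\<in>{y<..2*y}. 1 / (6 * real b) * exp (- sieve_penalty B (6 * b)))"
proof -
  define \<mu> where "\<mu> = prime_recip_sum (24 * y) + 104"
  have "real y * exp (- \<mu>) \<le> (\<Sum>b\<in>{y<..2*y}. exp (- sieve_penalty B (6 * b)))"
    using card_mult_exp_neg_le_sum_exp[of "{y<..2*y}" "\<lambda>b. sieve_penalty B (6 * b)" \<mu>]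
      sum_sieve_penalty_block_le[of B y]
    unfolding \<mu>_def by simp
  then have "exp (- \<mu>) / 12 \<le> 1 / (12 * real y) * (\<Sum>b\<in>{y<..2*y}. exp (- sieve_penalty B (6 * b)))"
    using assms by (simp add: field_simps)
  also have "\<dots> = (\<Sum>b\<in>{y<..2*y}. 1 / (12 * real y) * exp (- sieve_penalty B (6 * b)))"
    by (simp add: sum_distrib_left)
  also have "\<dots> \<le> (\<Sum>b\<in>{y<..2*y}. 1 / (6 * real b) * exp (- sieve_penalty B (6 * b)))"
    by (intro sum_mono mult_right_mono divide_left_mono) auto
  finally show ?thesis unfolding \<mu>_def .
qed

lemma sum_dyadic_blocks_le:
  fixes g :: "nat \<Rightarrow> real"
  assumes "\<And>b. 0 \<le> g b"
  shows "(\<Sum>j<J. \<Sum>b\<in>{2^j<..2*2^j}. g b) \<le> (\<Sum>b\<in>{1..2^J}. g b)"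
proof (induction J)
  case 0
  then show ?case using assms by simp
next
  case (Suc J)
  have "{1..2 ^ Suc J} = {1..2^J} \<union> {2^J<..(2::nat) * 2^J}" by auto
  then have "(\<Sum>b\<in>{1..2 ^ Suc J}. g b) = (\<Sum>b\<in>{1..2^J}. g b) + (\<Sum>b\<in>{2^J<..2*2^J}. g b)"
    by (simp add: sum.union_disjoint ivl_disj_int)
  then show ?case using Suc by simp
qed

lemma ln_24_mult_power_2_le: "ln (real (24 * 2 ^ j)) \<le> real j + 5"
proof -
  have "ln (real (24 * 2 ^ j)) \<le> ln (2 ^ (j + 5))" by (intro ln_mono) (simp_all add: power_add)
  also have "\<dots> = real (j + 5) * ln 2" by (simp add: ln_realpow)
  also have "\<dots> \<le> real j + 5" using ln_2_less_1 by (simp add: mult_left_le)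
  finally show ?thesis .
qed

lemma exp_neg_prime_recip_sum_dyadic_ge:
  obtains c where "c > 0"
    "\<And>j. c / (real j + 1) \<le> exp (- (prime_recip_sum (24 * 2 ^ j) + 104)) / 12"
proof -
  obtain C where C: "\<forall>N\<ge>3. prime_recip_sum N \<le> ln (ln (real N)) + C"
    using prime_recip_sum_le_ln_ln by blast
  define c where "c = exp (- (C + 104)) / 60"
  have "c > 0" unfolding c_def by simp
  have "c / (real j + 1) \<le> exp (- (prime_recip_sum (24 * 2 ^ j) + 104)) / 12" for j
  proof -
    define L where "L = ln (real (24 * 2 ^ j))"
    have "(1::nat) \<le> 2 ^ j" by simp
    then have "(1::nat) < 24 * 2 ^ j" by linarith
    then have "1 < real (24 * 2 ^ j)" by (metis of_nat_1 of_nat_less_iff)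
    then have "L > 0" unfolding L_def by (rule ln_gt_zero)
    have "L \<le> real j + 5" unfolding L_def by (rule ln_24_mult_power_2_le)
    have "12 * c / (real j + 1) \<le> exp (- (C + 104)) / (real j + 5)"
      unfolding c_def by (simp add: field_simps)
    also have "\<dots> \<le> exp (- (C + 104)) / L"
      using \<open>L > 0\<close> \<open>L \<le> real j + 5\<close> by (intro divide_left_mono) auto
    also have "\<dots> = exp (- (ln L + C + 104))"
      using \<open>L > 0\<close> by (simp add: exp_add exp_diff exp_minus' field_simps)
    also have "\<dots> \<le> exp (- (prime_recip_sum (24 * 2 ^ j) + 104))"
      using C[rule_format, of "24 * 2 ^ j"] unfolding L_def by simp
    finally show ?thesis by (simp add: mult.commute)
  qed
  with \<open>c > 0\<close> show thesis by (rule that)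
qed

lemma expected_recip_sum_dyadic_ge:
  obtains c where "c > 0" "\<And>J. c * ln (real J + 1) \<le> expected_recip_sum (2 ^ J)"
proof -
  obtain c where "c > 0"
    and block: "\<And>j. c / (real j + 1) \<le> exp (- (prime_recip_sum (24 * 2 ^ j) + 104)) / 12"
    using exp_neg_prime_recip_sum_dyadic_ge by blast
  have "c * ln (real J + 1) \<le> expected_recip_sum (2 ^ J)" for J
  proof -
    let ?g = "\<lambda>b. 1 / (6 * real b) * exp (- sieve_penalty (2 ^ J) (6 * b))"
    have "c * ln (real J + 1) \<le> c * harm J"
      using ln_le_harm \<open>c > 0\<close> by (intro mult_left_mono) auto
    also have "\<dots> = (\<Sum>j<J. c / (real j + 1))"
      by (simp add: harm_def sum_distrib_left sum.atLeast1_atMost_eq field_simps)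
    also have "\<dots> \<le> (\<Sum>j<J. exp (- (prime_recip_sum (24 * 2 ^ j) + 104)) / 12)"
      by (intro sum_mono block)
    also have "\<dots> \<le> (\<Sum>j<J. \<Sum>b\<in>{2^j<..2*2^j}. ?g b)"
      by (intro sum_mono block_penalized_recip_sum_ge) simp
    also have "\<dots> \<le> (\<Sum>b\<in>{1..2^J}. ?g b)" by (rule sum_dyadic_blocks_le) simp
    also have "\<dots> \<le> expected_recip_sum (2 ^ J)" by (rule expected_recip_sum_ge_penalized)
    finally show ?thesis .
  qed
  with \<open>c > 0\<close> show thesis by (rule that)
qed

theorem lemma6:
  fixes M :: real
  assumes "M > 0"
  shows "\<exists>A. admissible A \<and> (\<Sum>a\<in>A. 1 / real a) > M"
proof -
  obtain c where "c > 0" and c: "\<And>J. c * ln (real J + 1) \<le> expected_recip_sum (2 ^ J)"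
    using expected_recip_sum_dyadic_ge by blast
  define J where "J = nat \<lceil>exp (M / c)\<rceil>"
  have "exp (M / c) < real J + 1" unfolding J_def by linarith
  then have "M / c < ln (real J + 1)" by (metis exp_gt_zero less_trans ln_exp ln_less_cancel_iff)
  then have "M < expected_recip_sum (2 ^ J)" using c[of J] \<open>c > 0\<close> by (simp add: field_simps)
  moreover obtain r where "r \<in> residue_choices (2 ^ J)"
    and "expected_recip_sum (2 ^ J) \<le> (\<Sum>a\<in>sifted_set (2 ^ J) r. 1 / real a)"
    using exists_sifted_set_recip_sum_ge by blast
  ultimately show ?thesis using admissible_sifted_set by fastforce
qed

end
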